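(* Let $r_1, r_2 \geq 2$ be integers. Suppose that for each $i\in\{1,2\}$ the inequality $$\chi\big(KG^{r_i}(n,k,s)\big) \geq \left\lceil \frac{n - r_i(k-s-1)}{r_i-1} \right\rceil$$ holds for all non-negative integers $n,k,s$ satisfying $n \geq r_i(k-1)+1$ and $k > s \geq 0$. Then $$\chi\big(KG^{r_1 r_2}(n,k,s)\big) \geq \left\lceil \frac{n - r_1 r_2(k-s-1)}{r_1 r_2-1} \right\rceil$$ holds for all non-negative integers $n,k,s$ satisfying $n \geq r_1 r_2(k-1)+1$ and $k > s \geq 0$.
   Context: For a positive integer $n$, $[n]=\{1,\ldots,n\}$. A hypergraph $\mathcal{H}=(V,E)$ consists of a finite vertex set $V$ and a set $E$ of non-empty subsets of $V$ (edges). A proper $m$-coloring of $\mathcal{H}$ is a map $c:V\to\{1,\ldots,m\}$ such that no edge is monochromatic, i.e. $|c(e)|\geq 2$ for every edge $e$. The chromatic number $\chi(\mathcal{H})$ is the least $m$ for which a proper $m$-coloring exists. The generalized Kneser hypergraph $KG^{r}(n,k,s)$ has as vertices all $k$-element subsets of $[n]$, and its edges are the sets $\{X_1,\ldots,X_r\}$ of $r$ distinct vertices such that $|X_i\cap X_j|\leq s$ for all $i\neq j$. *)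

theory Defs
  imports Complex_Main
begin

definition proper_coloring :: "'a set \<Rightarrow> 'a set set \<Rightarrow> nat \<Rightarrow> ('a \<Rightarrow> nat) \<Rightarrow> bool" where
  "proper_coloring V E m c \<longleftrightarrow> (\<forall>v\<in>V. c v \<in> {1..m}) \<and> (\<forall>e\<in>E. card (c ` e) \<ge> 2)"

definition chromatic_number :: "'a set \<Rightarrow> 'a set set \<Rightarrow> nat" where
  "chromatic_number V E = (LEAST m. \<exists>c. proper_coloring V E m c)"

definition kneser_vertices :: "nat \<Rightarrow> nat \<Rightarrow> nat set set" where
  "kneser_vertices n k = {X. X \<subseteq> {1..n} \<and> card X = k}"

definition kneser_edges :: "nat \<Rightarrow> nat \<Rightarrow> nat \<Rightarrow> nat \<Rightarrow> nat set set set" where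
  "kneser_edges r n k s = {E. E \<subseteq> kneser_vertices n k \<and> card E = r \<and>
      (\<forall>X\<in>E. \<forall>Y\<in>E. X \<noteq> Y \<longrightarrow> card (X \<inter> Y) \<le> s)}"

definition chi_KG :: "nat \<Rightarrow> nat \<Rightarrow> nat \<Rightarrow> nat \<Rightarrow> nat" where
  "chi_KG r n k s = chromatic_number (kneser_vertices n k) (kneser_edges r n k s)"

end

theory Submission
  imports Defs
begin

text \<open>Let m be the chromatic number of KG^(r1 r2)(n, k, s), fix a proper m-colouring c, and suppose n is
  larger than the claimed bound allows. Inside a K-subset Y of [n], the k-sets through a fixed t-subset
  of Y form a copy of KG^r2(K - t, k - t, s - t); for suitable K and t the bound for r2 makes its
  chromatic number exceed m, so Y contains r2 k-sets of one colour pairwise meeting in at most s points.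
  Colouring Y by that colour is a proper m-colouring of KG^r1(n, K, s): r1 K-sets pairwise meeting in at
  most s < k points carry disjoint such families, whose union would be a monochromatic edge of
  KG^(r1 r2)(n, k, s). This contradicts the bound for r1.\<close>

lemma two_le_card_image_iff:
  assumes "finite e" "e \<noteq> {}"
  shows "2 \<le> card (c ` e) \<longleftrightarrow> (\<nexists>i. c ` e = {i})"
proof -
  have "card (c ` e) \<noteq> 0" using assms by simp
  then have "2 \<le> card (c ` e) \<longleftrightarrow> card (c ` e) \<noteq> 1" by linarith
  then show ?thesis by (simp add: card_1_singleton_iff)
qed

lemma chromatic_number_le: "proper_coloring V E m c \<Longrightarrow> chromatic_number V E \<le> m"
  unfolding chromatic_number_def by (rule Least_le) blast

lemma proper_coloring_chromatic_number:
  assumes "finite V" and "\<And>e. e \<in> E \<Longrightarrow> e \<subseteq> V \<and> 2 \<le> card e"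
  shows "\<exists>c. proper_coloring V E (chromatic_number V E) c"
proof -
  obtain f where f: "bij_betw f V {0..<card V}"
    using ex_bij_betw_finite_nat[OF \<open>finite V\<close>] by blast
  have "proper_coloring V E (card V) (\<lambda>x. f x + 1)"
    unfolding proper_coloring_def
  proof safe
    fix v assume "v \<in> V"
    then show "f v + 1 \<in> {1..card V}" using f bij_betwE by fastforce
  next
    fix e assume "e \<in> E"
    with assms(2) have "e \<subseteq> V" and two: "2 \<le> card e" by auto
    with f have "inj_on (\<lambda>x. f x + 1) e" by (auto simp: bij_betw_def inj_on_def)
    with two show "2 \<le> card ((\<lambda>x. f x + 1) ` e)" by (simp add: card_image)
  qed
  then have "\<exists>m c. proper_coloring V E m c" by blast
  then show ?thesis unfolding chromatic_number_def by (rule LeastI_ex)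
qed

lemma monochromatic_edge_if_less_chromatic_number:
  assumes "m < chromatic_number V E" and "\<forall>v\<in>V. c v \<in> {1..m}"
    and "\<And>e. e \<in> E \<Longrightarrow> e \<subseteq> V \<and> finite e \<and> e \<noteq> {}"
  shows "\<exists>e\<in>E. \<exists>i\<in>{1..m}. c ` e = {i}"
proof -
  have "\<not> proper_coloring V E m c" using assms(1) chromatic_number_le by fastforce
  then obtain e where e: "e \<in> E" "\<not> 2 \<le> card (c ` e)"
    using assms(2) unfolding proper_coloring_def by blast
  have e_props: "e \<subseteq> V" "finite e" "e \<noteq> {}" using assms(3)[OF e(1)] by auto
  then obtain i where i: "c ` e = {i}" using two_le_card_image_iff[of e c] e(2) by blast
  from e_props obtain v where v: "v \<in> e" "v \<in> V" by blast
  with i have "c v = i" by blast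
  with v(2) assms(2) have "i \<in> {1..m}" by blast
  with e(1) i show ?thesis by blast
qed

lemma finite_kneser_vertices: "finite (kneser_vertices n k)"
  unfolding kneser_vertices_def by (rule finite_subset[of _ "Pow {1..n}"]) auto

lemma kneser_edgeD:
  assumes "e \<in> kneser_edges r n k s"
  shows "e \<subseteq> kneser_vertices n k" "finite e" "card e = r"
    "\<And>X Y. X \<in> e \<Longrightarrow> Y \<in> e \<Longrightarrow> X \<noteq> Y \<Longrightarrow> card (X \<inter> Y) \<le> s"
  using assms finite_subset[OF _ finite_kneser_vertices] unfolding kneser_edges_def by auto

lemma proper_coloring_chi_KG:
  "2 \<le> r \<Longrightarrow> \<exists>c. proper_coloring (kneser_vertices n k) (kneser_edges r n k s) (chi_KG r n k s) c"
  unfolding chi_KG_def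
  by (rule proper_coloring_chromatic_number[OF finite_kneser_vertices]) (auto dest: kneser_edgeD)

lemma monochromatic_kneser_edge:
  assumes "m < chi_KG r n k s" "1 \<le> r" "\<forall>v\<in>kneser_vertices n k. c v \<in> {1..m}"
  shows "\<exists>e\<in>kneser_edges r n k s. \<exists>i\<in>{1..m}. c ` e = {i}"
  using assms unfolding chi_KG_def
  by (intro monochromatic_edge_if_less_chromatic_number) (auto dest: kneser_edgeD)

lemma exists_kneser_embedding_into_subset:
  assumes Y: "Y \<subseteq> {1..n}" "card Y = K" and "t \<le> K" "t \<le> k"
  shows "\<exists>\<phi>. (\<forall>B\<in>kneser_vertices (K - t) (k - t). \<phi> B \<in> kneser_vertices n k \<and> \<phi> B \<subseteq> Y) \<and>
    inj_on \<phi> (kneser_vertices (K - t) (k - t)) \<and>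
    (\<forall>B\<in>kneser_vertices (K - t) (k - t). \<forall>B'\<in>kneser_vertices (K - t) (k - t).
       card (\<phi> B \<inter> \<phi> B') \<le> t + card (B \<inter> B'))"
proof -
  have finY: "finite Y" using Y(1) finite_subset by blast
  obtain Z where Z: "Z \<subseteq> Y" "card Z = t"
    using obtain_subset_with_card_n[of t Y] \<open>t \<le> K\<close> Y(2) by metis
  have finZ: "finite Z" using Z(1) finY finite_subset by blast
  have "card (Y - Z) = K - t" using Y Z finZ by (simp add: card_Diff_subset)
  then obtain g where g: "bij_betw g {1..K - t} (Y - Z)"
    using finite_same_card_bij[of "{1..K - t}" "Y - Z"] finY by auto
  then have g_inj: "inj_on g {1..K - t}" and g_img: "g ` {1..K - t} = Y - Z"
    by (auto simp: bij_betw_def)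
  define \<phi> where "\<phi> B = Z \<union> g ` B" for B
  have sub: "B \<subseteq> {1..K - t}" if "B \<in> kneser_vertices (K - t) (k - t)" for B
    using that by (simp add: kneser_vertices_def)
  have \<phi>_minus: "\<phi> B - Z = g ` B" if "B \<subseteq> {1..K - t}" for B
    unfolding \<phi>_def using that g_img by blast
  have "inj_on \<phi> (kneser_vertices (K - t) (k - t))"
    by (rule inj_onI) (metis sub \<phi>_minus g_inj inj_on_image_eq_iff)
  moreover have "card (\<phi> B \<inter> \<phi> B') \<le> t + card (B \<inter> B')"
    if "B \<in> kneser_vertices (K - t) (k - t)" "B' \<in> kneser_vertices (K - t) (k - t)" for B B'
  proof -
    have BB': "B \<subseteq> {1..K - t}" "B' \<subseteq> {1..K - t}" using sub that by blast+
    then have "\<phi> B \<inter> \<phi> B' = Z \<union> g ` (B \<inter> B')"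
      unfolding \<phi>_def using inj_on_image_Int[OF g_inj BB'] g_img by blast
    then have "card (\<phi> B \<inter> \<phi> B') \<le> card Z + card (g ` (B \<inter> B'))" by (simp add: card_Un_le)
    also have "\<dots> \<le> t + card (B \<inter> B')" using Z card_image_le[of "B \<inter> B'" g] BB'
      by (simp add: finite_subset)
    finally show ?thesis .
  qed
  moreover have "\<phi> B \<in> kneser_vertices n k \<and> \<phi> B \<subseteq> Y"
    if "B \<in> kneser_vertices (K - t) (k - t)" for B
  proof -
    have B: "B \<subseteq> {1..K - t}" "card B = k - t" using that by (auto simp: kneser_vertices_def)
    then have "g ` B \<subseteq> Y - Z" using g_img by blast
    moreover have "card (g ` B) = k - t" using B g_inj by (metis card_image inj_on_subset)
    ultimately have "card (\<phi> B) = t + (k - t)"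
      unfolding \<phi>_def using Z finY by (subst card_Un_disjoint) (auto intro: finite_subset)
    moreover have "\<phi> B \<subseteq> Y" unfolding \<phi>_def using \<open>g ` B \<subseteq> Y - Z\<close> Z by blast
    ultimately show ?thesis using Y \<open>t \<le> k\<close> by (auto simp: kneser_vertices_def)
  qed
  ultimately show ?thesis by blast
qed

lemma kneser_edge_image:
  assumes e: "e \<in> kneser_edges r N k' s'"
    and vertex: "\<And>B. B \<in> kneser_vertices N k' \<Longrightarrow> \<phi> B \<in> kneser_vertices n k"
    and inj: "inj_on \<phi> (kneser_vertices N k')"
    and Int: "\<And>B B'. B \<in> kneser_vertices N k' \<Longrightarrow> B' \<in> kneser_vertices N k' \<Longrightarrow>
      card (\<phi> B \<inter> \<phi> B') \<le> t + card (B \<inter> B')"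
    and "t + s' \<le> s"
  shows "\<phi> ` e \<in> kneser_edges r n k s"
proof -
  note e_facts = kneser_edgeD[OF e]
  have "card (\<phi> ` e) = r" using card_image inj_on_subset[OF inj e_facts(1)] e_facts(3) by metis
  moreover have "card (A \<inter> A') \<le> s" if AA: "A \<in> \<phi> ` e" "A' \<in> \<phi> ` e" "A \<noteq> A'" for A A'
  proof -
    obtain B B' where BB: "B \<in> e" "B' \<in> e" "A = \<phi> B" "A' = \<phi> B'" using AA by blast
    with AA(3) have "card (A \<inter> A') \<le> t + card (B \<inter> B')" using Int e_facts(1) by blast
    also have "\<dots> \<le> t + s'" using e_facts(4) BB AA(3) by auto
    finally show ?thesis using \<open>t + s' \<le> s\<close> by simp
  qed
  moreover have "\<phi> ` e \<subseteq> kneser_vertices n k" using vertex e_facts(1) by blast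
  ultimately show ?thesis unfolding kneser_edges_def by blast
qed

lemma monochromatic_kneser_edge_within:
  assumes col: "\<forall>v\<in>kneser_vertices n k. c v \<in> {1..m}" and Y: "Y \<in> kneser_vertices n K"
    and "m < chi_KG r (K - t) (k - t) (s - t)" "1 \<le> r" "t \<le> K" "t \<le> s" "s < k"
  shows "\<exists>F\<in>kneser_edges r n k s. \<Union>F \<subseteq> Y \<and> (\<exists>i\<in>{1..m}. c ` F = {i})"
proof -
  have "Y \<subseteq> {1..n}" "card Y = K" "t \<le> k" using Y assms(6,7) by (simp_all add: kneser_vertices_def)
  from exists_kneser_embedding_into_subset[OF this(1,2) \<open>t \<le> K\<close> this(3)] obtain \<phi> where
      \<phi>_vertex: "\<And>B. B \<in> kneser_vertices (K - t) (k - t) \<Longrightarrow> \<phi> B \<in> kneser_vertices n k \<and> \<phi> B \<subseteq> Y"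
    and \<phi>_inj: "inj_on \<phi> (kneser_vertices (K - t) (k - t))"
    and \<phi>_Int: "\<And>B B'. B \<in> kneser_vertices (K - t) (k - t) \<Longrightarrow> B' \<in> kneser_vertices (K - t) (k - t) \<Longrightarrow>
      card (\<phi> B \<inter> \<phi> B') \<le> t + card (B \<inter> B')"
    by blast
  have "\<forall>B\<in>kneser_vertices (K - t) (k - t). (c \<circ> \<phi>) B \<in> {1..m}" using col \<phi>_vertex by simp
  from monochromatic_kneser_edge[OF assms(3,4) this]
  obtain e i where e: "e \<in> kneser_edges r (K - t) (k - t) (s - t)" "i \<in> {1..m}"
      "(c \<circ> \<phi>) ` e = {i}"
    by blast
  have "t + (s - t) \<le> s" using \<open>t \<le> s\<close> by simp
  moreover have "\<phi> B \<in> kneser_vertices n k" if "B \<in> kneser_vertices (K - t) (k - t)" for B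
    using \<phi>_vertex[OF that] by blast
  ultimately have "\<phi> ` e \<in> kneser_edges r n k s"
    using kneser_edge_image[OF e(1) _ \<phi>_inj \<phi>_Int] by blast
  moreover have "\<Union>(\<phi> ` e) \<subseteq> Y" using \<phi>_vertex kneser_edgeD(1)[OF e(1)] by blast
  ultimately show ?thesis using e(2,3) by (metis image_comp)
qed

lemma kneser_edge_Union:
  assumes e: "e \<in> kneser_edges r1 n K s" and "s < k"
    and F: "\<And>Y. Y \<in> e \<Longrightarrow> F Y \<in> kneser_edges r2 n k s \<and> \<Union>(F Y) \<subseteq> Y"
  shows "(\<Union>Y\<in>e. F Y) \<in> kneser_edges (r1 * r2) n k s"
proof -
  note e_facts = kneser_edgeD[OF e]
  have card_vertex: "card A = k" if "A \<in> F Y" "Y \<in> e" for A Y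
    using kneser_edgeD(1)[OF F[OF that(2), THEN conjunct1]] that(1)
    by (auto simp: kneser_vertices_def)
  have across: "card (A \<inter> B) \<le> s" if "A \<in> F Y" "B \<in> F Y'" "Y \<in> e" "Y' \<in> e" "Y \<noteq> Y'"
    for A B Y Y'
  proof -
    have "A \<inter> B \<subseteq> Y \<inter> Y'" using that F by blast
    moreover have "finite Y"
      using that(3) e_facts(1) finite_subset[of Y "{1..n}"] by (auto simp: kneser_vertices_def)
    ultimately have "card (A \<inter> B) \<le> card (Y \<inter> Y')" by (simp add: card_mono)
    also have "\<dots> \<le> s" using e_facts(4) that(3-5) .
    finally show ?thesis .
  qed
  have disjoint: "F Y \<inter> F Y' = {}" if "Y \<in> e" "Y' \<in> e" "Y \<noteq> Y'" for Y Y'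
  proof (rule ccontr)
    assume "F Y \<inter> F Y' \<noteq> {}"
    then obtain A where A: "A \<in> F Y" "A \<in> F Y'" by blast
    have "card (A \<inter> A) \<le> s" using across[OF A that] .
    with card_vertex[OF A(1) that(1)] \<open>s < k\<close> show False by simp
  qed
  have "card (\<Union>Y\<in>e. F Y) = (\<Sum>Y\<in>e. card (F Y))"
    using e_facts(2) disjoint F[THEN conjunct1, THEN kneser_edgeD(2)] by (intro card_UN_disjoint) auto
  also have "\<dots> = r1 * r2" using e_facts(3) F[THEN conjunct1, THEN kneser_edgeD(3)] by simp
  finally have "card (\<Union>Y\<in>e. F Y) = r1 * r2" .
  moreover have "card (A \<inter> B) \<le> s"
    if AB: "A \<in> (\<Union>Y\<in>e. F Y)" "B \<in> (\<Union>Y\<in>e. F Y)" "A \<noteq> B" for A B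
  proof -
    obtain Y Y' where YY: "Y \<in> e" "Y' \<in> e" "A \<in> F Y" "B \<in> F Y'" using AB(1,2) by blast
    show ?thesis
    proof (cases "Y = Y'")
      case True
      then show ?thesis using kneser_edgeD(4)[OF F[OF YY(1), THEN conjunct1]] YY AB(3) by blast
    qed (use across YY in blast)
  qed
  moreover have "(\<Union>Y\<in>e. F Y) \<subseteq> kneser_vertices n k"
    using F[THEN conjunct1, THEN kneser_edgeD(1)] by blast
  ultimately show ?thesis unfolding kneser_edges_def by blast
qed

lemma chi_KG_le_if_monochromatic_edges_within:
  assumes c: "proper_coloring (kneser_vertices n k) (kneser_edges (r1 * r2) n k s) m c"
    and "s < k" "1 \<le> r1"
    and mono: "\<And>Y. Y \<in> kneser_vertices n K \<Longrightarrow>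
      \<exists>F\<in>kneser_edges r2 n k s. \<Union>F \<subseteq> Y \<and> (\<exists>i\<in>{1..m}. c ` F = {i})"
  shows "chi_KG r1 n K s \<le> m"
proof -
  obtain F d where Fd: "\<And>Y. Y \<in> kneser_vertices n K \<Longrightarrow>
      F Y \<in> kneser_edges r2 n k s \<and> \<Union>(F Y) \<subseteq> Y \<and> d Y \<in> {1..m} \<and> c ` F Y = {d Y}"
    using mono by metis
  have "proper_coloring (kneser_vertices n K) (kneser_edges r1 n K s) m d"
    unfolding proper_coloring_def
  proof (intro conjI ballI)
    show "d Y \<in> {1..m}" if "Y \<in> kneser_vertices n K" for Y using Fd that by blast
    fix e assume e: "e \<in> kneser_edges r1 n K s"
    note e_facts = kneser_edgeD[OF e]
    have "e \<noteq> {}" using e_facts(3) \<open>1 \<le> r1\<close> by auto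
    moreover have "d ` e \<noteq> {i}" for i
    proof
      assume i: "d ` e = {i}"
      have "(\<Union>Y\<in>e. F Y) \<in> kneser_edges (r1 * r2) n k s"
        using e \<open>s < k\<close> Fd e_facts(1) by (intro kneser_edge_Union) auto
      then have "2 \<le> card (c ` (\<Union>Y\<in>e. F Y))" using c unfolding proper_coloring_def by blast
      moreover have "c ` (\<Union>Y\<in>e. F Y) = d ` e" using Fd e_facts(1) by (auto simp: image_UN)
      ultimately show False using i by simp
    qed
    ultimately show "2 \<le> card (d ` e)" using two_le_card_image_iff e_facts(2) by blast
  qed
  then show ?thesis unfolding chi_KG_def by (rule chromatic_number_le)
qed

definition kneser_chi_lower_bound :: "nat \<Rightarrow> bool" where
  "kneser_chi_lower_bound r \<longleftrightarrow>
     (\<forall>n k s. r * (k - 1) + 1 \<le> n \<and> s < k \<longrightarrow> n \<le> chi_KG r n k s * (r - 1) + r * (k - s - 1))"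

lemma ceiling_kneser_bound_le_iff:
  fixes r n k s m :: nat
  assumes "2 \<le> r" "s < k"
  shows "\<lceil>(real n - real r * (real k - real s - 1)) / (real r - 1)\<rceil> \<le> int m \<longleftrightarrow>
    n \<le> m * (r - 1) + r * (k - s - 1)"
proof -
  have pos: "real r - 1 > 0" using assms(1) by simp
  have diffs: "real k - real s - 1 = real (k - s - 1)" "real r - 1 = real (r - 1)"
    using assms by (simp_all add: of_nat_diff)
  have "\<lceil>(real n - real r * (real k - real s - 1)) / (real r - 1)\<rceil> \<le> int m \<longleftrightarrow>
      (real n - real r * (real k - real s - 1)) / (real r - 1) \<le> real m"
    by (simp add: ceiling_le_iff)
  also have "\<dots> \<longleftrightarrow> real n - real r * (real k - real s - 1) \<le> real m * (real r - 1)"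
    by (rule pos_divide_le_eq[OF pos])
  also have "\<dots> \<longleftrightarrow> real n \<le> real (m * (r - 1) + r * (k - s - 1))"
    unfolding diffs of_nat_add of_nat_mult by linarith
  finally show ?thesis by (rule trans) (rule of_nat_le_iff)
qed

lemma kneser_chi_lower_bound_iff:
  assumes "2 \<le> r"
  shows "kneser_chi_lower_bound r \<longleftrightarrow>
    (\<forall>n k s. n \<ge> r * (k - 1) + 1 \<and> k > s \<longrightarrow>
       int (chi_KG r n k s) \<ge> \<lceil>(real n - real r * (real k - real s - 1)) / (real r - 1)\<rceil>)"
  unfolding kneser_chi_lower_bound_def
  by (simp add: ceiling_kneser_bound_le_iff[OF assms] cong: imp_cong)

lemma less_chi_KG_if_kneser_chi_lower_bound:
  assumes "kneser_chi_lower_bound r" "r * (k - 1) < n" "s < k"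
    and "m * (r - 1) + r * (k - s - 1) < n"
  shows "m < chi_KG r n k s"
proof -
  have "n \<le> chi_KG r n k s * (r - 1) + r * (k - s - 1)"
    using assms(1-3) unfolding kneser_chi_lower_bound_def by simp
  with assms(4) have "m * (r - 1) < chi_KG r n k s * (r - 1)" by linarith
  then show ?thesis by simp
qed

lemma less_chi_KG_at_threshold:
  assumes "kneser_chi_lower_bound r" "s < k" "r * s \<le> m * (r - 1)"
  shows "m < chi_KG r (m * (r - 1) + r * (k - s - 1) + 1) k s"
proof (rule less_chi_KG_if_kneser_chi_lower_bound[OF assms(1) _ assms(2)])
  have "k - 1 = (k - s - 1) + s" using assms(2) by simp
  then show "r * (k - 1) < m * (r - 1) + r * (k - s - 1) + 1"
    using assms(3) by (simp add: distrib_left)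
qed simp

lemma mult_diff_one_mult:
  fixes m r1 r2 :: nat
  assumes "1 \<le> r1" "1 \<le> r2"
  shows "m * (r1 * r2 - 1) = m * (r1 - 1) + r1 * (m * (r2 - 1))"
proof -
  obtain a b where "r1 = Suc a" "r2 = Suc b" using assms by (metis Suc_le_D One_nat_def)
  then show ?thesis by (simp add: algebra_simps)
qed

lemma kneser_block_size_bound:
  fixes m q s t j n r1 r2 :: nat
  assumes r1: "2 \<le> r1" and r2: "2 \<le> r2" and q: "m * (r2 - 1) < (q + 1) * r2"
    and t: "t = s - min s q"
    and n: "m * (r1 * r2 - 1) + r1 * r2 * j < n" "r1 * r2 * (s + j) < n"
  shows "r1 * (m * (r2 - 1) + r2 * j + t) < n"
proof (rule ccontr)
  assume "\<not> ?thesis"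
  then have le: "n \<le> r1 * (m * (r2 - 1)) + r1 * r2 * j + r1 * t" by (simp add: algebra_simps)
  obtain a b where ab: "r1 = a + 2" "r2 = b + 2" using r1 r2 by (metis add.commute le_Suc_ex)
  have "m * (r1 - 1) < r1 * t" using n(1) le mult_diff_one_mult[of r1 r2 m] r1 r2 by linarith
  then have h1: "m * (a + 1) < (a + 2) * t" unfolding ab by simp
  then have "t > 0" by (cases t) auto
  then have s: "s = q + t" using t by auto
  have "r1 * r2 * s < r1 * (m * (r2 - 1)) + r1 * t" using n(2) le by (simp add: distrib_left)
  then have "(a + 2) * ((b + 2) * (q + t)) < (a + 2) * (m * (b + 1) + t)"
    unfolding ab s by (simp add: algebra_simps)
  then have "(b + 2) * (q + t) < m * (b + 1) + t" by (meson mult_less_cancel1)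
  then have "(b + 1) * (q + t) < (b + 1) * m" by (simp add: algebra_simps)
  then have "q + t < m" by (meson mult_less_cancel1)
  then have "(a + 2) * (t + q + 1) \<le> (a + 2) * m" by (intro mult_le_mono2) simp
  with h1 have A: "(a + 2) * (q + 1) < m" by (simp add: algebra_simps)
  have "(a + 2) * (m * (b + 1)) < (a + 2) * ((q + 1) * (b + 2))"
    using q ab by (intro mult_strict_left_mono) auto
  also have "\<dots> = ((a + 2) * (q + 1)) * (b + 2)" by (simp add: algebra_simps)
  also have "\<dots> < m * (b + 2)" using A by (intro mult_strict_right_mono) auto
  finally have "((a + 2) * (b + 1)) * m < (b + 2) * m" by (simp add: algebra_simps)
  then have "(a + 2) * (b + 1) < b + 2" by (meson mult_less_cancel2)
  then show False by (simp add: algebra_simps)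
qed

text \<open>With j = k - s - 1 and K = m(r2 - 1) + r2 j + t + 1, the second conclusion makes the bound for r2
  applicable to KG^r2(K - t, k - t, s - t) and the third makes the bound for r1 applicable to KG^r1(n, K, s);
  t is the least value allowed by the second.\<close>

lemma exists_kneser_shift:
  fixes m s j n r1 r2 :: nat
  assumes r1: "2 \<le> r1" and r2: "2 \<le> r2"
    and n: "m * (r1 * r2 - 1) + r1 * r2 * j < n" "r1 * r2 * (s + j) < n"
  shows "\<exists>t\<le>s. r2 * (s - t) \<le> m * (r2 - 1) \<and> r1 * (m * (r2 - 1) + r2 * j + t) < n"
proof -
  define q where "q = m * (r2 - 1) div r2"
  define t where "t = s - min s q"
  have "m * (r2 - 1) = q * r2 + m * (r2 - 1) mod r2" unfolding q_def by simp
  moreover have "m * (r2 - 1) mod r2 < r2" using r2 by simp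
  moreover have "(q + 1) * r2 = q * r2 + r2" by simp
  ultimately have q_upper: "m * (r2 - 1) < (q + 1) * r2" by linarith
  have "t \<le> s" unfolding t_def by simp
  moreover have "r2 * (s - t) \<le> r2 * q" unfolding t_def by simp
  then have "r2 * (s - t) \<le> m * (r2 - 1)"
    unfolding q_def by (meson le_trans times_div_less_eq_dividend mult.commute)
  ultimately show ?thesis using kneser_block_size_bound[OF r1 r2 q_upper t_def n] by blast
qed

lemma kneser_chi_lower_bound_mult:
  assumes r1: "2 \<le> r1" and r2: "2 \<le> r2"
    and bound1: "kneser_chi_lower_bound r1" and bound2: "kneser_chi_lower_bound r2"
  shows "kneser_chi_lower_bound (r1 * r2)"
  unfolding kneser_chi_lower_bound_def
proof (intro allI impI, elim conjE)
  fix n k s assume n_large: "r1 * r2 * (k - 1) + 1 \<le> n" and "s < k"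
  obtain j where k: "k = s + j + 1" using less_imp_Suc_add[OF \<open>s < k\<close>] by auto
  define m where "m = chi_KG (r1 * r2) n k s"
  have "2 \<le> r1 * r2" using r1 r2 mult_le_mono[of 2 r1 1 r2] by simp
  then obtain c where c: "proper_coloring (kneser_vertices n k) (kneser_edges (r1 * r2) n k s) m c"
    unfolding m_def by (rule proper_coloring_chi_KG[THEN exE])
  show "n \<le> m * (r1 * r2 - 1) + r1 * r2 * (k - s - 1)"
  proof (rule ccontr)
    assume "\<not> ?thesis"
    then have n_big: "m * (r1 * r2 - 1) + r1 * r2 * j < n" using k by simp
    have "r1 * r2 * (s + j) < n" using n_large k by simp
    from exists_kneser_shift[OF r1 r2 n_big this] obtain t where "t \<le> s"
      and t_admissible: "r2 * (s - t) \<le> m * (r2 - 1)"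
      and K_small: "r1 * (m * (r2 - 1) + r2 * j + t) < n"
      by blast
    define K where "K = m * (r2 - 1) + r2 * j + t + 1"
    have "s - t \<le> r2 * (s - t)" using r2 by simp
    with t_admissible \<open>t \<le> s\<close> have "s < K" unfolding K_def by linarith
    have "s - t < k - t" using \<open>s < k\<close> \<open>t \<le> s\<close> by simp
    from less_chi_KG_at_threshold[OF bound2 this t_admissible]
    have chi2: "m < chi_KG r2 (K - t) (k - t) (s - t)" using k \<open>t \<le> s\<close> unfolding K_def by simp
    have colors: "\<forall>v\<in>kneser_vertices n k. c v \<in> {1..m}"
      using c unfolding proper_coloring_def by blast
    have params: "1 \<le> r2" "t \<le> K" "1 \<le> r1" using r1 r2 \<open>t \<le> s\<close> \<open>s < K\<close> by simp_all
    note mono = monochromatic_kneser_edge_within[OF colors _ chi2 params(1,2) \<open>t \<le> s\<close> \<open>s < k\<close>]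
    from chi_KG_le_if_monochromatic_edges_within[OF c \<open>s < k\<close> params(3) mono]
    have chi1_le: "chi_KG r1 n K s \<le> m" .
    have "K - s - 1 \<le> m * (r2 - 1) + r2 * j" using \<open>t \<le> s\<close> unfolding K_def by linarith
    then have "r1 * (K - s - 1) \<le> r1 * (m * (r2 - 1) + r2 * j)" by (rule mult_le_mono2)
    then have "m * (r1 - 1) + r1 * (K - s - 1) < n"
      using n_big mult_diff_one_mult[of r1 r2 m] r1 r2 by (simp add: distrib_left)
    moreover have "r1 * (K - 1) < n" using K_small unfolding K_def by simp
    ultimately have "m < chi_KG r1 n K s"
      using less_chi_KG_if_kneser_chi_lower_bound[OF bound1 _ \<open>s < K\<close>] by blast
    with chi1_le show False by simp
  qed
qed

theorem lemma3:
  fixes r1 r2 :: nat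
  assumes "r1 \<ge> 2" and "r2 \<ge> 2"
    and "\<forall>n k s. n \<ge> r1 * (k - 1) + 1 \<and> k > s \<longrightarrow>
           int (chi_KG r1 n k s) \<ge>
             \<lceil>(real n - real r1 * (real k - real s - 1)) / (real r1 - 1)\<rceil>"
    and "\<forall>n k s. n \<ge> r2 * (k - 1) + 1 \<and> k > s \<longrightarrow>
           int (chi_KG r2 n k s) \<ge>
             \<lceil>(real n - real r2 * (real k - real s - 1)) / (real r2 - 1)\<rceil>"
  shows "\<forall>n k s. n \<ge> r1 * r2 * (k - 1) + 1 \<and> k > s \<longrightarrow>
           int (chi_KG (r1 * r2) n k s) \<ge>
             \<lceil>(real n - real (r1 * r2) * (real k - real s - 1)) / (real (r1 * r2) - 1)\<rceil>"
proof -
  have "2 \<le> r1 * r2" using assms(1,2) mult_le_mono[of 2 r1 1 r2] by simp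
  moreover have "kneser_chi_lower_bound (r1 * r2)"
    using assms by (intro kneser_chi_lower_bound_mult) (simp_all add: kneser_chi_lower_bound_iff)
  ultimately show ?thesis by (simp add: kneser_chi_lower_bound_iff)
qed

end
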